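(* Fix a phylogenetic model of $k$-state character change on leaf-labelled trees (for instance any of the CFN, JC, K2P or K3P models). Let $T_1,T_2,T_3,T_4$ be $n$-taxon trees on the taxon set $[n]$, not necessarily distinct, and let $K\subseteq[n]$. If $V_{T_1|_K}\ast V_{T_2|_K}\not\subseteq V_{T_3|_K}\ast V_{T_4|_K}$, then $V_{T_1}\ast V_{T_2}\not\subseteq V_{T_3}\ast V_{T_4}$.
   Context: Taxa are labelled by $[n]=\{1,\dots,n\}$. For each leaf-labelled tree $T$ the model has a polynomial parameterization map $\psi_T$ sending continuous (stochastic) parameters to the joint distribution of states at the leaves, a vector in $\mathbb{C}^{k^n}$; extending $\psi_T$ to complex parameters, $V_T\subseteq\mathbb{P}^{k^n-1}$ denotes the Zariski closure of its image. For $K\subseteq[n]$, $T|_K$ is the induced subtree of $T$ with leaf set $K$; marginalization of a distribution onto the leaves in $K$ is a linear map $\mathbb{C}^{k^n}\to\mathbb{C}^{k^{|K|}}$ which, for the models considered, sends $V_T$ to $V_{T|_K}$. For varieties $V,W$ in projective space, the join $V\ast W$ is the Zariski closure of the union of all lines meeting both $V$ and $W$ (equivalently the closure of the set of all mixtures $\pi p+(1-\pi)p'$ with $p\in V$, $p'\in W$); when $V=W$ it is the secant variety. *)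

theory Defs
  imports Complex_Main
begin

text \<open>Joint distributions of k-state characters at the leaves in a leaf set L are
  points p :: (nat => nat) => complex; coordinates are indexed by the state
  assignments sigma with sigma i < k for i in L and sigma i = 0 for i outside L
  (k^|L| coordinates).\<close>

definition assign :: "nat \<Rightarrow> nat set \<Rightarrow> (nat \<Rightarrow> nat) set" where
  "assign k L = {\<sigma>. (\<forall>i\<in>L. \<sigma> i < k) \<and> (\<forall>i. i \<notin> L \<longrightarrow> \<sigma> i = 0)}"

definition dist_space :: "nat \<Rightarrow> nat set \<Rightarrow> ((nat \<Rightarrow> nat) \<Rightarrow> complex) set" where
  "dist_space k L = {p. \<forall>\<sigma>. \<sigma> \<notin> assign k L \<longrightarrow> p \<sigma> = 0}"

inductive polyfun :: "'a set \<Rightarrow> (('a \<Rightarrow> complex) \<Rightarrow> complex) \<Rightarrow> bool" for I where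
  pf_const: "polyfun I (\<lambda>p. c)"
| pf_coord: "x \<in> I \<Longrightarrow> polyfun I (\<lambda>p. p x)"
| pf_add: "polyfun I f \<Longrightarrow> polyfun I g \<Longrightarrow> polyfun I (\<lambda>p. f p + g p)"
| pf_mult: "polyfun I f \<Longrightarrow> polyfun I g \<Longrightarrow> polyfun I (\<lambda>p. f p * g p)"

definition zclosure :: "nat \<Rightarrow> nat set \<Rightarrow> ((nat \<Rightarrow> nat) \<Rightarrow> complex) set
    \<Rightarrow> ((nat \<Rightarrow> nat) \<Rightarrow> complex) set" where
  "zclosure k L S = {p \<in> dist_space k L. \<forall>f. polyfun (assign k L) f \<and> (\<forall>q\<in>S. f q = 0) \<longrightarrow> f p = 0}"

definition join :: "nat \<Rightarrow> nat set \<Rightarrow> ((nat \<Rightarrow> nat) \<Rightarrow> complex) set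
    \<Rightarrow> ((nat \<Rightarrow> nat) \<Rightarrow> complex) set \<Rightarrow> ((nat \<Rightarrow> nat) \<Rightarrow> complex) set" where
  "join k L V W = zclosure k L
     {(\<lambda>\<sigma>. \<pi> * p \<sigma> + (1 - \<pi>) * q \<sigma>) | \<pi> p q. p \<in> V \<and> q \<in> W}"

definition marg :: "nat \<Rightarrow> nat set \<Rightarrow> nat set \<Rightarrow> ((nat \<Rightarrow> nat) \<Rightarrow> complex)
    \<Rightarrow> ((nat \<Rightarrow> nat) \<Rightarrow> complex)" where
  "marg k L K p = (\<lambda>\<sigma>. if \<sigma> \<in> assign k K
      then (\<Sum>\<tau>\<in>{\<tau> \<in> assign k L. \<forall>i\<in>K. \<tau> i = \<sigma> i}. p \<tau>) else 0)"

definition model_variety :: "nat \<Rightarrow> ('t \<Rightarrow> nat set) \<Rightarrow> ('t \<Rightarrow> 'p \<Rightarrow> ((nat \<Rightarrow> nat) \<Rightarrow> complex))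
    \<Rightarrow> ('t \<Rightarrow> 'p set) \<Rightarrow> 't \<Rightarrow> ((nat \<Rightarrow> nat) \<Rightarrow> complex) set" where
  "model_variety k leaves psi \<Theta> T = zclosure k (leaves T) (psi T ` \<Theta> T)"

end

theory Submission
  imports Defs
begin

text \<open>Marginalization is linear with coordinates that are sums of coordinates, so it is a
  polynomial map and carries the join on the full leaf set into the join of the marginal
  images. Mixing is polynomial in each argument, so the join of two Zariski closures is no
  larger than the join of the sets themselves. Hence the join of the restricted varieties lies
  in the closure of the marginal of the full join, and an inclusion between the full joins
  descends to the restricted ones.\<close>

lemma polyfun_sum: "S \<subseteq> I \<Longrightarrow> polyfun I (\<lambda>p. \<Sum>x\<in>S. p x)"
proof (induction S rule: infinite_finite_induct)
  case (insert x F)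
  then show ?case by (simp add: polyfun.pf_add polyfun.pf_coord)
qed (simp_all add: polyfun.pf_const)

lemma polyfun_marg:
  "polyfun (assign k K) f \<Longrightarrow> polyfun (assign k L) (\<lambda>p. f (marg k L K p))"
proof (induction rule: polyfun.induct)
  case (pf_coord \<sigma>)
  have "polyfun (assign k L) (\<lambda>p. \<Sum>\<tau>\<in>{\<tau> \<in> assign k L. \<forall>i\<in>K. \<tau> i = \<sigma> i}. p \<tau>)"
    by (rule polyfun_sum) auto
  with pf_coord show ?case by (simp add: marg_def)
qed (simp_all add: polyfun.intros)

lemma polyfun_affine:
  "polyfun I f \<Longrightarrow> polyfun I (\<lambda>p. f (\<lambda>x. a * p x + b x))"
  by (induction rule: polyfun.induct) (simp_all add: polyfun.intros)

lemma zclosure_subset_dist_space: "zclosure k L S \<subseteq> dist_space k L"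
  unfolding zclosure_def by blast

lemma zclosure_superset: "S \<subseteq> dist_space k L \<Longrightarrow> S \<subseteq> zclosure k L S"
  unfolding zclosure_def by blast

lemma zclosure_mono: "S \<subseteq> S' \<Longrightarrow> zclosure k L S \<subseteq> zclosure k L S'"
  unfolding zclosure_def by blast

lemma zclosure_least: "S \<subseteq> zclosure k L S' \<Longrightarrow> zclosure k L S \<subseteq> zclosure k L S'"
  unfolding zclosure_def by blast

lemma zclosure_image:
  assumes "\<And>f. polyfun (assign k K) f \<Longrightarrow> polyfun (assign k L) (\<lambda>p. f (g p))"
    and "\<And>p. p \<in> dist_space k L \<Longrightarrow> g p \<in> dist_space k K"
  shows "g ` zclosure k L S \<subseteq> zclosure k K (g ` S)"
  using assms unfolding zclosure_def by auto

lemma marg_dist_space: "marg k L K p \<in> dist_space k K"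
  unfolding marg_def dist_space_def by auto

lemma image_marg_zclosure:
  "marg k L K ` zclosure k L S \<subseteq> zclosure k K (marg k L K ` S)"
  by (rule zclosure_image) (simp_all add: polyfun_marg marg_dist_space)

definition mix :: "complex \<Rightarrow> ('a \<Rightarrow> complex) \<Rightarrow> ('a \<Rightarrow> complex) \<Rightarrow> 'a \<Rightarrow> complex" where
  "mix \<pi> p q = (\<lambda>x. \<pi> * p x + (1 - \<pi>) * q x)"

definition mixtures :: "('a \<Rightarrow> complex) set \<Rightarrow> ('a \<Rightarrow> complex) set \<Rightarrow> ('a \<Rightarrow> complex) set" where
  "mixtures A B = {mix \<pi> p q | \<pi> p q. p \<in> A \<and> q \<in> B}"

lemma join_eq_zclosure_mixtures: "join k L A B = zclosure k L (mixtures A B)"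
  unfolding join_def mixtures_def mix_def by simp

lemma mix_dist_space:
  "p \<in> dist_space k L \<Longrightarrow> q \<in> dist_space k L \<Longrightarrow> mix \<pi> p q \<in> dist_space k L"
  unfolding mix_def dist_space_def by simp

lemma polyfun_mix_left: "polyfun I f \<Longrightarrow> polyfun I (\<lambda>p. f (mix \<pi> p q))"
  using polyfun_affine[of I f \<pi> "\<lambda>x. (1 - \<pi>) * q x"] by (simp add: mix_def)

lemma polyfun_mix_right: "polyfun I f \<Longrightarrow> polyfun I (\<lambda>q. f (mix \<pi> p q))"
  using polyfun_affine[of I f "1 - \<pi>" "\<lambda>x. \<pi> * p x"] by (simp add: mix_def add.commute)

lemma mixtures_subset_join:
  assumes "A \<subseteq> dist_space k L" "B \<subseteq> dist_space k L"
  shows "mixtures A B \<subseteq> join k L A B"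
  unfolding join_eq_zclosure_mixtures
  by (rule zclosure_superset) (use assms in \<open>auto simp: mixtures_def intro!: mix_dist_space\<close>)

lemma join_mono: "A \<subseteq> A' \<Longrightarrow> B \<subseteq> B' \<Longrightarrow> join k L A B \<subseteq> join k L A' B'"
  unfolding join_eq_zclosure_mixtures mixtures_def by (rule zclosure_mono) blast

text \<open>Closing one argument at a time: with one point fixed, mixing is a polynomial map in
  the other, so it carries the closure of a set into the closure of its image.\<close>

lemma join_zclosure_subset:
  assumes A: "A \<subseteq> dist_space k L"
  shows "join k L (zclosure k L A) (zclosure k L B) \<subseteq> join k L A B"
proof -
  have right: "mix \<pi> a q \<in> join k L A B" if "a \<in> A" "q \<in> zclosure k L B" for \<pi> a q
  proof -
    have "mix \<pi> a ` zclosure k L B \<subseteq> zclosure k L (mix \<pi> a ` B)"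
      by (rule zclosure_image) (use that A in \<open>auto simp: polyfun_mix_right intro!: mix_dist_space\<close>)
    then have "mix \<pi> a q \<in> zclosure k L (mix \<pi> a ` B)"
      using that(2) by blast
    also have "\<dots> \<subseteq> join k L A B"
      unfolding join_eq_zclosure_mixtures
      by (rule zclosure_mono) (use that in \<open>auto simp: mixtures_def\<close>)
    finally show ?thesis .
  qed
  have "mix \<pi> p q \<in> join k L A B"
    if "p \<in> zclosure k L A" "q \<in> zclosure k L B" for \<pi> p q
  proof -
    have "q \<in> dist_space k L"
      using that(2) zclosure_subset_dist_space by blast
    then have "mix \<pi> p q \<in> zclosure k L ((\<lambda>a. mix \<pi> a q) ` A)"
      using zclosure_image[of k L L "\<lambda>a. mix \<pi> a q" A] that(1)
      by (auto simp: polyfun_mix_left mix_dist_space)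
    also have "\<dots> \<subseteq> join k L A B"
      unfolding join_eq_zclosure_mixtures
      by (rule zclosure_least) (use right that(2) in \<open>auto simp: join_eq_zclosure_mixtures\<close>)
    finally show ?thesis .
  qed
  then have "mixtures (zclosure k L A) (zclosure k L B) \<subseteq> zclosure k L (mixtures A B)"
    by (auto simp: mixtures_def join_eq_zclosure_mixtures)
  then show ?thesis
    unfolding join_eq_zclosure_mixtures by (rule zclosure_least)
qed

lemma marg_mix: "marg k L K (mix \<pi> p q) = mix \<pi> (marg k L K p) (marg k L K q)"
  unfolding marg_def mix_def by (auto simp: sum.distrib sum_distrib_left)

lemma image_marg_mixtures:
  "marg k L K ` mixtures A B = mixtures (marg k L K ` A) (marg k L K ` B)"
proof (intro equalityI subsetI)
  fix x assume "x \<in> mixtures (marg k L K ` A) (marg k L K ` B)"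
  then obtain \<pi> p q where "x = mix \<pi> (marg k L K p) (marg k L K q)" "p \<in> A" "q \<in> B"
    by (auto simp: mixtures_def)
  then have "x = marg k L K (mix \<pi> p q)" "mix \<pi> p q \<in> mixtures A B"
    by (auto simp: marg_mix mixtures_def)
  then show "x \<in> marg k L K ` mixtures A B" by blast
qed (auto simp: mixtures_def marg_mix; blast)

lemma image_marg_join_subset:
  "marg k L K ` join k L A B \<subseteq> join k K (marg k L K ` A) (marg k L K ` B)"
  using image_marg_zclosure[of k L K "mixtures A B"]
  by (simp add: join_eq_zclosure_mixtures image_marg_mixtures)

theorem lemma1:
  fixes k n :: nat
    and leaves :: "'t \<Rightarrow> nat set"
    and restr :: "'t \<Rightarrow> nat set \<Rightarrow> 't"
    and psi :: "'t \<Rightarrow> 'p \<Rightarrow> ((nat \<Rightarrow> nat) \<Rightarrow> complex)"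
    and \<Theta> :: "'t \<Rightarrow> 'p set"
    and T1 T2 T3 T4 :: 't
    and K :: "nat set"
  assumes model_restr: "\<And>T K'. leaves T = {1..n} \<Longrightarrow> K' \<subseteq> {1..n} \<Longrightarrow>
      leaves (restr T K') = K'"
    and model_marg: "\<And>T K'. leaves T = {1..n} \<Longrightarrow> K' \<subseteq> {1..n} \<Longrightarrow>
      zclosure k K' (marg k {1..n} K' ` model_variety k leaves psi \<Theta> T)
        = model_variety k leaves psi \<Theta> (restr T K')"
    and trees: "leaves T1 = {1..n}" "leaves T2 = {1..n}" "leaves T3 = {1..n}" "leaves T4 = {1..n}"
    and K: "K \<subseteq> {1..n}"
    and notsub: "\<not> join k K (model_variety k leaves psi \<Theta> (restr T1 K)) (model_variety k leaves psi \<Theta> (restr T2 K))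
        \<subseteq> join k K (model_variety k leaves psi \<Theta> (restr T3 K)) (model_variety k leaves psi \<Theta> (restr T4 K))"
  shows "\<not> join k {1..n} (model_variety k leaves psi \<Theta> T1) (model_variety k leaves psi \<Theta> T2)
        \<subseteq> join k {1..n} (model_variety k leaves psi \<Theta> T3) (model_variety k leaves psi \<Theta> T4)"
proof
  define V where "V T = model_variety k leaves psi \<Theta> T" for T
  define m where "m = marg k {1..n} K"
  have V_dist: "V T \<subseteq> dist_space k {1..n}" if "leaves T = {1..n}" for T
    using zclosure_subset_dist_space[of k "leaves T"] that by (simp add: V_def model_variety_def)
  have restr_V: "V (restr T K) = zclosure k K (m ` V T)" if "leaves T = {1..n}" for T
    using model_marg[OF that K] by (simp add: V_def m_def)
  have m_V_dist: "m ` V T \<subseteq> dist_space k K" for T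
    by (auto simp: m_def marg_dist_space)
  assume "join k {1..n} (V T1) (V T2) \<subseteq> join k {1..n} (V T3) (V T4)"
  then have "m ` mixtures (V T1) (V T2) \<subseteq> m ` join k {1..n} (V T3) (V T4)"
    using mixtures_subset_join[OF V_dist[OF trees(1)] V_dist[OF trees(2)]] by blast
  also have "\<dots> \<subseteq> join k K (m ` V T3) (m ` V T4)"
    unfolding m_def by (rule image_marg_join_subset)
  finally have "join k K (m ` V T1) (m ` V T2) \<subseteq> join k K (m ` V T3) (m ` V T4)"
    unfolding m_def image_marg_mixtures[symmetric] join_eq_zclosure_mixtures[of k K]
    by (rule zclosure_least)
  moreover have "join k K (V (restr T1 K)) (V (restr T2 K)) \<subseteq> join k K (m ` V T1) (m ` V T2)"
    unfolding restr_V[OF trees(1)] restr_V[OF trees(2)] by (rule join_zclosure_subset[OF m_V_dist])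
  moreover have "join k K (m ` V T3) (m ` V T4) \<subseteq> join k K (V (restr T3 K)) (V (restr T4 K))"
    unfolding restr_V[OF trees(3)] restr_V[OF trees(4)]
    by (intro join_mono zclosure_superset m_V_dist)
  ultimately show False
    using notsub unfolding V_def by blast
qed

end
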